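(* Let $E\subset\mathbb{R}^2$ be a compact, path connected set, let $r>0$, and let $\Gamma^\ast$ be an $r$-maximum distance minimizer of $B(E,r)$. Let $x_0,x_1\in\Gamma^\ast\cap B(E,2r)$. Then there exist $N\ge1$ and points $x_2,\dots,x_N\in\Gamma^\ast\cap B(E,2r)$ such that $|x_j-x_{j+1}|\le4r$ for $j=1,\dots,N$, where $x_{N+1}:=x_0$.
   Context: For $A\subset\mathbb{R}^2$ and $r>0$, $B(A,r):=\{x:\mathrm{dist}(x,A)\le r\}$. A rectifiable curve is the image of a Lipschitz map $[0,1]\to\mathbb{R}^2$. $\Lambda(K,r):=\inf\{\mathcal{H}^1(\Gamma):\Gamma \text{ a rectifiable curve with } B(\Gamma,r)\supset K\}$. An $r$-maximum distance minimizer of $K$ is a rectifiable curve $\Gamma$ with $B(\Gamma,r)\supset K$ and $\mathcal{H}^1(\Gamma)=\Lambda(K,r)$. *)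

theory Defs
  imports "HOL-Analysis.Analysis"
begin

definition cnbhd :: "(real^2) set \<Rightarrow> real \<Rightarrow> (real^2) set" where
  "cnbhd A r = {x. infdist x A \<le> r}"

definition rect_curve :: "(real^2) set \<Rightarrow> bool" where
  "rect_curve G \<longleftrightarrow> (\<exists>(g::real \<Rightarrow> real^2) L. L-lipschitz_on {0..1} g \<and> G = g ` {0..1})"

text \<open>One-dimensional Hausdorff measure (normalised so that it is length):
  H^1_delta(A) = inf of sums of diameters of countable covers by bounded sets of diameter \<le> delta,
  H^1(A) = sup over delta > 0.\<close>
definition hausdorff1_delta :: "real \<Rightarrow> (real^2) set \<Rightarrow> ennreal" where
  "hausdorff1_delta d A = Inf {(\<Sum>i. ennreal (diameter (C i))) | C :: nat \<Rightarrow> (real^2) set.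
       A \<subseteq> (\<Union>i. C i) \<and> (\<forall>i. bounded (C i) \<and> diameter (C i) \<le> d)}"

definition hausdorff1 :: "(real^2) set \<Rightarrow> ennreal" where
  "hausdorff1 A = (SUP d\<in>{0<..}. hausdorff1_delta d A)"

definition Lambda :: "(real^2) set \<Rightarrow> real \<Rightarrow> ennreal" where
  "Lambda K r = Inf {hausdorff1 G | G. rect_curve G \<and> K \<subseteq> cnbhd G r}"

definition max_dist_minimizer :: "(real^2) set \<Rightarrow> real \<Rightarrow> (real^2) set \<Rightarrow> bool" where
  "max_dist_minimizer K r G \<longleftrightarrow> rect_curve G \<and> K \<subseteq> cnbhd G r \<and> hausdorff1 G = Lambda K r"

end

theory Submission
  imports Defs
begin

text \<open>Join \<open>x\<^sub>1\<close> and \<open>x\<^sub>0\<close> to points \<open>e\<^sub>1, e\<^sub>0\<close> of \<open>E\<close> at distance \<open>\<le> 2r\<close>, connect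
  \<open>e\<^sub>1\<close> to \<open>e\<^sub>0\<close> by a path in \<open>E\<close> and sample it finely enough that consecutive samples are
  \<open>2r\<close>-close. Since \<open>\<Gamma>\<close> covers \<open>B(E,r)\<close>, each sample has a point of \<open>\<Gamma>\<close> within \<open>r\<close>, which
  lies in \<open>B(E,2r)\<close>; consecutive such points are \<open>r + 2r + r = 4r\<close>-close, and so are the
  links to \<open>x\<^sub>1\<close> and \<open>x\<^sub>0\<close> (\<open>2r + r\<close>).\<close>

lemma rect_curve_compact:
  assumes "rect_curve G"
  shows "compact G" "G \<noteq> {}"
proof -
  from assms obtain L and g :: "real \<Rightarrow> real^2"
    where lip: "L-lipschitz_on {0..1} g" and G: "G = g ` {0..1}"
    unfolding rect_curve_def by blast
  from lip have "continuous_on {0..1} g" by (rule lipschitz_on_continuous_on)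
  then show "compact G" using G compact_continuous_image by blast
  show "G \<noteq> {}" using G by auto
qed

lemma cnbhd_nearest_point:
  assumes "compact A" "A \<noteq> {}" "x \<in> cnbhd A r"
  obtains z where "z \<in> A" "dist x z \<le> r"
proof -
  obtain z where "z \<in> A" "infdist x A = dist x z"
    using infdist_attains_inf[OF compact_imp_closed[OF assms(1)] assms(2)] by blast
  then show thesis using that assms(3) unfolding cnbhd_def by auto
qed

lemma bounded_cnbhd:
  assumes "compact A" "A \<noteq> {}"
  shows "bounded (cnbhd A r)"
proof -
  obtain B where B: "\<And>z. z \<in> A \<Longrightarrow> norm z \<le> B"
    using compact_imp_bounded[OF assms(1)] unfolding bounded_iff by blast
  have "norm x \<le> B + r" if x: "x \<in> cnbhd A r" for x
  proof -
    obtain z where "z \<in> A" "dist x z \<le> r" using cnbhd_nearest_point[OF assms x] .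
    then show ?thesis using B[of z] norm_triangle_ineq2[of x z] by (simp add: dist_norm)
  qed
  then show ?thesis unfolding bounded_iff by blast
qed

lemma cnbhd_empty: "r \<ge> 0 \<Longrightarrow> cnbhd {} r = UNIV"
  unfolding cnbhd_def infdist_def by simp

lemma path_connected_fine_chain:
  fixes S :: "'a::metric_space set"
  assumes "path_connected S" "a \<in> S" "b \<in> S" "\<delta> > 0"
  obtains m q where "q 0 = a" "q m = b"
    "\<forall>k\<le>m. q k \<in> S" "\<forall>k<m. dist (q k) (q (Suc k)) \<le> \<delta>"
proof -
  obtain p where p: "path p" "path_image p \<subseteq> S" "pathstart p = a" "pathfinish p = b"
    using assms(1-3) unfolding path_connected_def by blast
  have "uniformly_continuous_on {0..1} p"
    using p(1) compact_uniformly_continuous unfolding path_def by blast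
  then obtain d where d: "d > 0"
    and close: "\<And>s t. s \<in> {0..1} \<Longrightarrow> t \<in> {0..1} \<Longrightarrow> dist t s < d \<Longrightarrow> dist (p t) (p s) < \<delta>"
    using assms(4) unfolding uniformly_continuous_on_def by metis
  obtain m :: nat where m: "m > 0" "1 / real m < d"
    using d ex_inverse_of_nat_less by (auto simp: inverse_eq_divide)
  define q where "q k = p (real k / real m)" for k
  have grid: "real k / real m \<in> {0..1}" if "k \<le> m" for k
    using that m by (auto simp: field_simps)
  show thesis
  proof
    show "q 0 = a" "q m = b"
      using m p(3,4) unfolding q_def pathstart_def pathfinish_def by simp_all
    show "\<forall>k\<le>m. q k \<in> S"
      using grid p(2) unfolding q_def path_image_def by blast
    show "\<forall>k<m. dist (q k) (q (Suc k)) \<le> \<delta>"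
    proof (intro allI impI)
      fix k assume "k < m"
      moreover have "dist (real (Suc k) / real m) (real k / real m) = 1 / real m"
        using m by (simp add: dist_real_def field_simps)
      ultimately show "dist (q k) (q (Suc k)) \<le> \<delta>"
        using close[of "real k / real m" "real (Suc k) / real m"] grid m(2)
        unfolding q_def by (simp add: dist_commute)
    qed
  qed
qed

lemma dist_perturb_le:
  fixes a a' b b' :: "'a::metric_space"
  assumes "dist a a' \<le> s" "dist b b' \<le> t"
  shows "dist a' b' \<le> dist a b + s + t"
  using dist_triangle[of a' b' a] dist_triangle[of a b' b] assms by (simp add: dist_commute)

lemma covered_by_curve_nonempty:
  assumes "rect_curve \<Gamma>" "cnbhd E r \<subseteq> cnbhd \<Gamma> r" "r \<ge> 0"
  shows "E \<noteq> {}"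
proof
  assume "E = {}"
  then have "UNIV \<subseteq> cnbhd \<Gamma> r" using assms(2,3) cnbhd_empty[of r] by simp
  then show False
    using bounded_cnbhd rect_curve_compact[OF assms(1)] not_bounded_UNIV bounded_subset by blast
qed

lemma covered_by_curve_nearest_map:
  assumes "rect_curve \<Gamma>" "cnbhd E r \<subseteq> cnbhd \<Gamma> r" "r \<ge> 0"
  obtains c where "\<And>y. y \<in> E \<Longrightarrow> c y \<in> \<Gamma>" "\<And>y. y \<in> E \<Longrightarrow> dist y (c y) \<le> r"
proof -
  have "\<exists>z\<in>\<Gamma>. dist y z \<le> r" if "y \<in> E" for y
  proof -
    have "y \<in> cnbhd E r" using that assms(3) by (simp add: cnbhd_def)
    then have "y \<in> cnbhd \<Gamma> r" using assms(2) by blast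
    then show ?thesis by (metis cnbhd_nearest_point rect_curve_compact[OF assms(1)])
  qed
  then show thesis using that by metis
qed

text \<open>Closing the chain \<open>x\<^sub>1, y\<^sub>0, \<dots>, y\<^sub>m, x\<^sub>0\<close> into the indexing of the theorem:
  \<open>x\<^sub>i = y\<^sub>i\<^sub>-\<^sub>2\<close> for \<open>2 \<le> i \<le> N = m + 2\<close>.\<close>

lemma closed_chain_through:
  fixes x0 x1 :: "'a::metric_space" and y :: "nat \<Rightarrow> 'a"
  assumes "\<forall>k\<le>m. y k \<in> S"
    and "dist x1 (y 0) \<le> d" and "\<forall>k<m. dist (y k) (y (Suc k)) \<le> d" and "dist (y m) x0 \<le> d"
  shows "\<exists>N::nat. N \<ge> 1 \<and> (\<exists>x. x 0 = x0 \<and> x 1 = x1 \<and> (\<forall>i\<in>{2..N}. x i \<in> S) \<and>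
           (\<forall>j\<in>{1..N}. dist (x j) (if j = N then x0 else x (j+1)) \<le> d))"
proof (intro exI conjI ballI)
  define x where "x i = (if i = 0 then x0 else if i = 1 then x1 else y (i - 2))" for i
  show "m + 2 \<ge> 1" "x 0 = x0" "x 1 = x1" unfolding x_def by simp_all
  show "x i \<in> S" if "i \<in> {2..m+2}" for i
    using that assms(1) unfolding x_def by auto
  show "dist (x j) (if j = m + 2 then x0 else x (j+1)) \<le> d" if j: "j \<in> {1..m+2}" for j
  proof -
    consider "j = 1" | "j = m + 2" | "2 \<le> j" "j < m + 2"
      using j by fastforce
    then show ?thesis
    proof cases
      case 3
      then have "j + 1 - 2 = Suc (j - 2)" "j - 2 < m" by simp_all
      then show ?thesis using 3 assms(3) by (auto simp: x_def)
    qed (use assms in \<open>auto simp: x_def\<close>)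
  qed
qed

theorem lemma4p3:
  fixes E \<Gamma> :: "(real^2) set" and r :: real and x0 x1 :: "real^2"
  assumes "compact E" and "path_connected E" and "r > 0"
    and "max_dist_minimizer (cnbhd E r) r \<Gamma>"
    and "x0 \<in> \<Gamma> \<inter> cnbhd E (2*r)" and "x1 \<in> \<Gamma> \<inter> cnbhd E (2*r)"
  shows "\<exists>N::nat. N \<ge> 1 \<and> (\<exists>x :: nat \<Rightarrow> real^2. x 0 = x0 \<and> x 1 = x1 \<and>
           (\<forall>i\<in>{2..N}. x i \<in> \<Gamma> \<inter> cnbhd E (2*r)) \<and>
           (\<forall>j\<in>{1..N}. dist (x j) (if j = N then x0 else x (j+1)) \<le> 4*r))"
proof -
  from assms(3,4) have "rect_curve \<Gamma>" "cnbhd E r \<subseteq> cnbhd \<Gamma> r" "r \<ge> 0"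
    unfolding max_dist_minimizer_def by auto
  note cover = this
  obtain c where c: "\<And>y. y \<in> E \<Longrightarrow> c y \<in> \<Gamma>" "\<And>y. y \<in> E \<Longrightarrow> dist y (c y) \<le> r"
    using covered_by_curve_nearest_map[OF cover] by blast
  have c_near_E: "c y \<in> cnbhd E (2*r)" if "y \<in> E" for y
    using infdist_le[OF that, of "c y"] c[OF that] \<open>r > 0\<close> by (simp add: cnbhd_def dist_commute)
  obtain e0 e1 where e: "e0 \<in> E" "dist x0 e0 \<le> 2*r" "e1 \<in> E" "dist x1 e1 \<le> 2*r"
    using assms(5,6) cnbhd_nearest_point[OF assms(1) covered_by_curve_nonempty[OF cover]]
    by (metis IntD2)
  have "2*r > 0" using \<open>r > 0\<close> by simp
  then obtain m q where q: "q 0 = e1" "q m = e0" "\<forall>k\<le>m. q k \<in> E"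
    "\<forall>k<m. dist (q k) (q (Suc k)) \<le> 2*r"
    using path_connected_fine_chain[OF assms(2) e(3,1)] by blast
  show ?thesis
  proof (rule closed_chain_through[where y = "c \<circ> q" and m = m])
    show "\<forall>k\<le>m. (c \<circ> q) k \<in> \<Gamma> \<inter> cnbhd E (2*r)" using q(3) c c_near_E by auto
    show "dist x1 ((c \<circ> q) 0) \<le> 4*r"
      using dist_perturb_le[of x1 x1 0 e1 "c e1" r] c(2)[OF e(3)] e(4) q(1) \<open>r > 0\<close> by simp
    show "dist ((c \<circ> q) m) x0 \<le> 4*r"
      using dist_perturb_le[of e0 "c e0" r x0 x0 0] c(2)[OF e(1)] e(2) q(2) \<open>r > 0\<close>
      by (simp add: dist_commute)
    show "\<forall>k<m. dist ((c \<circ> q) k) ((c \<circ> q) (Suc k)) \<le> 4*r"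
    proof (intro allI impI)
      fix k assume "k < m"
      with q(3,4) have "q k \<in> E" "q (Suc k) \<in> E" "dist (q k) (q (Suc k)) \<le> 2*r" by auto
      then show "dist ((c \<circ> q) k) ((c \<circ> q) (Suc k)) \<le> 4*r"
        using dist_perturb_le[OF c(2) c(2), of "q k" "q (Suc k)"] by simp
    qed
  qed
qed

end
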